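(* Suppose there is a deterministic protocol solving Byzantine Broadcast with a value set containing $[N]$, tolerating $f$ faults, in which all honest processes decide within $T$ steps, and whose message and signature complexities are at most $mc$ and $sc$ in every execution (by relabeling, such a protocol exists with any prescribed process as broadcaster). Then for every $K\in\mathbb N$ there is a deterministic solution to the $K$-round Marker Problem tolerating $f$ faults, with $T$ steps per round and with message complexity at most $mc$ and signature complexity at most $sc$ per round.
   Context: Model. There are $N$ processes $P_1,\dots,P_N$; $[N]=\{1,\dots,N\}$. Time proceeds in discrete steps $t=0,1,2,\dots$ (synchronous network). At each step every process first receives all messages sent to it at the previous step, each together with the identity of its sender, and then may send messages to any processes; the behaviour of an honest process is given by its protocol, a deterministic function of its inputs and of all messages it has received so far. Communication is authenticated: a process $P_j$ can sign a string $m$, producing $(m)_{P_j}$; every sent message is signed by its sender; no process other than $P_j$ can produce a string containing $(m)_{P_j}$ unless it copied it from a message it received, except that corrupted processes can produce signatures of any corrupted process. An $f$-adversary knows all protocols and all inputs (including future inputs), chooses at time $0$ a set of at most $f$ processes to corrupt, and makes them behave arbitrarily subject to the signature rule; the other processes are honest and follow their protocol. $\mathcal H$ denotes the set of honest processes. A protocol tolerates $f$ faults if its required properties hold against every $f$-adversary. Message complexity = number of messages sent by honest processes; signature complexity = number of signatures contained in messages sent by honest processes, counted with multiplicity (each nested signature and each repetition counts). Byzantine Broadcast with value set $\mathcal V$ (a finite set containing $0$) and broadcaster $P_1$: at time $0$, $P_1$ receives an initial value $v_1\in\mathcal V$; each honest $P_n$ decides a value $d_n\in\mathcal V$ such that (consistency)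 all honest processes decide the same value, (validity) if $P_1$ is honest then every honest process decides $v_1$, (termination) every honest process decides in finite time. Marker Problem ($K$ rounds of $T$ steps). Time is divided into $K$ consecutive rounds of $T$ steps. At the end of each round every honest process decides either "unmarked" or "marked, with previous marked process $d$" where $d\in[N]\cup\{\perp\}$. The marked process $M$ of round $1$ is $P_1$ if $P_1\in\mathcal H$ and $\perp$ otherwise; the marked process of round $i+1$ is the honest process that decided "marked" at the end of round $i$, or $\perp$ if there is none. At the beginning of round $i$, if $M\neq\perp$, $M$ receives an input $I_i\in[N]$ ("send the marker to $P_{I_i}$"). Required at the end of every round $i$: (consistency) at most one honest process decides it is marked; (liveness) if $M\in\mathcal H$, $I_i=n$ and $P_n\in\mathcal H$, then $P_n$ decides it is marked with previous marked process $M$; (non-impersonation) if $M=\perp$ and an honest process decides it is marked with previous marked process $d$, then $d\notin\mathcal H$. The message/signature complexity per round counts messages/signatures sent by honest processes during one round. *)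

theory Defs
  imports Main
begin

text \<open>Messages are terms: atoms (arbitrary data, encoded as naturals), pairs,
and signatures Sig m j, standing for the signature of process j on m.\<close>

datatype msg = Atom nat | MPair msg msg | Sig msg nat

fun subterms :: "msg \<Rightarrow> msg set" where
  "subterms (Atom a) = {Atom a}"
| "subterms (MPair a b) = insert (MPair a b) (subterms a \<union> subterms b)"
| "subterms (Sig a k) = insert (Sig a k) (subterms a)"

fun sigcount :: "msg \<Rightarrow> nat" where
  "sigcount (Atom a) = 0"
| "sigcount (MPair a b) = sigcount a + sigcount b"
| "sigcount (Sig a k) = Suc (sigcount a)"

text \<open>Local history of a process after t steps: one record per step s < t,
consisting of the input received at step s (if any) and the list of
messages received at step s (pairs sender, payload), i.e. those sent to it
at step s-1.\<close>
type_synonym hist = "(nat option \<times> (nat \<times> msg) list) list"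

text \<open>Sending behaviour of the honest protocol: process n, given its local
history up to and including the receipt phase of the current step, sends a
list of (destination, payload) pairs.\<close>
type_synonym sendfn = "nat \<Rightarrow> hist \<Rightarrow> (nat \<times> msg) list"

type_synonym advfn = "nat \<Rightarrow> nat \<Rightarrow> (nat \<times> msg) list"

text \<open>Input oracle: given the step t, the histories of all processes after t
steps, and a process n, the input (if any) that n receives at step t.\<close>
type_synonym inpfn = "nat \<Rightarrow> (nat \<Rightarrow> hist) \<Rightarrow> nat \<Rightarrow> nat option"

definition deliver :: "nat \<Rightarrow> (nat \<Rightarrow> (nat \<times> msg) list) \<Rightarrow> nat \<Rightarrow> (nat \<times> msg) list" where
  "deliver N out n =
     concat (map (\<lambda>i. map (\<lambda>(j, m). (i, m)) (filter (\<lambda>(j, m). j = n) (out i))) [1..<Suc N])"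

text \<open>run N C sendf adv inp t = (histories after t steps, messages sent at step t-1).\<close>
fun run :: "nat \<Rightarrow> nat set \<Rightarrow> sendfn \<Rightarrow> advfn \<Rightarrow> inpfn \<Rightarrow> nat
             \<Rightarrow> (nat \<Rightarrow> hist) \<times> (nat \<Rightarrow> (nat \<times> msg) list)" where
  "run N C sendf adv inp 0 = ((\<lambda>n. []), (\<lambda>n. []))"
| "run N C sendf adv inp (Suc t) =
     (let h = fst (run N C sendf adv inp t);
          out = Product_Type.snd (run N C sendf adv inp t);
          h' = (\<lambda>n. h n @ [(inp t h n, deliver N out n)])
      in (h', (\<lambda>n. if n \<in> C then adv t n else sendf n (h' n))))"

definition hists_at :: "nat \<Rightarrow> nat set \<Rightarrow> sendfn \<Rightarrow> advfn \<Rightarrow> inpfn \<Rightarrow> nat \<Rightarrow> nat \<Rightarrow> hist" where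
  "hists_at N C sendf adv inp t = fst (run N C sendf adv inp t)"

definition sent_at :: "nat \<Rightarrow> nat set \<Rightarrow> sendfn \<Rightarrow> advfn \<Rightarrow> inpfn \<Rightarrow> nat \<Rightarrow> nat \<Rightarrow> (nat \<times> msg) list" where
  "sent_at N C sendf adv inp s = Product_Type.snd (run N C sendf adv inp (Suc s))"

definition valid_send :: "nat \<Rightarrow> sendfn \<Rightarrow> bool" where
  "valid_send N sendf \<longleftrightarrow>
     (\<forall>n \<in> {1..N}. \<forall>h. \<forall>(j, m) \<in> set (sendf n h). j \<in> {1..N} \<and>
        (\<forall>x k. Sig x k \<in> subterms m \<longrightarrow>
           k = n \<or> (\<exists>r \<in> set h. \<exists>(i, m') \<in> set (Product_Type.snd r). Sig x k \<in> subterms m')))"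

definition admissible_adv :: "nat \<Rightarrow> nat set \<Rightarrow> sendfn \<Rightarrow> advfn \<Rightarrow> inpfn \<Rightarrow> bool" where
  "admissible_adv N C sendf adv inp \<longleftrightarrow>
     (\<forall>t. \<forall>c \<in> C. \<forall>(j, m) \<in> set (adv t c). j \<in> {1..N} \<and>
        (\<forall>x k. Sig x k \<in> subterms m \<longrightarrow>
           k \<in> C \<or> (\<exists>c' \<in> C. \<exists>r \<in> set (hists_at N C sendf adv inp (Suc t) c').
                      \<exists>(i, m') \<in> set (Product_Type.snd r). Sig x k \<in> subterms m')))"

definition f_adversary :: "nat \<Rightarrow> nat \<Rightarrow> nat set \<Rightarrow> sendfn \<Rightarrow> advfn \<Rightarrow> inpfn \<Rightarrow> bool" where
  "f_adversary N f C sendf adv inp \<longleftrightarrow>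
     C \<subseteq> {1..N} \<and> card C \<le> f \<and> admissible_adv N C sendf adv inp"

definition honest :: "nat \<Rightarrow> nat set \<Rightarrow> nat set" where
  "honest N C = {1..N} - C"

definition msgs_at :: "nat \<Rightarrow> nat set \<Rightarrow> sendfn \<Rightarrow> advfn \<Rightarrow> inpfn \<Rightarrow> nat \<Rightarrow> nat" where
  "msgs_at N C sendf adv inp s = (\<Sum>n \<in> honest N C. length (sent_at N C sendf adv inp s n))"

definition sigs_at :: "nat \<Rightarrow> nat set \<Rightarrow> sendfn \<Rightarrow> advfn \<Rightarrow> inpfn \<Rightarrow> nat \<Rightarrow> nat" where
  "sigs_at N C sendf adv inp s =
     (\<Sum>n \<in> honest N C. sum_list (map (\<lambda>(j, m). sigcount m) (sent_at N C sendf adv inp s n)))"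

definition bb_input :: "nat \<Rightarrow> inpfn" where
  "bb_input v t h n = (if t = 0 \<and> n = 1 then Some v else None)"

definition solves_BB ::
  "nat \<Rightarrow> nat \<Rightarrow> nat set \<Rightarrow> nat \<Rightarrow> nat \<Rightarrow> nat \<Rightarrow> sendfn \<Rightarrow> (nat \<Rightarrow> hist \<Rightarrow> nat) \<Rightarrow> bool" where
  "solves_BB N f V T mc sc sendf dec \<longleftrightarrow>
     valid_send N sendf \<and>
     (\<forall>v \<in> V. \<forall>C adv. f_adversary N f C sendf adv (bb_input v) \<longrightarrow>
        (let H = honest N C; h = hists_at N C sendf adv (bb_input v) T in
          (\<forall>n \<in> H. dec n (h n) \<in> V) \<and>
          (\<forall>n \<in> H. \<forall>n' \<in> H. dec n (h n) = dec n' (h n')) \<and>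
          (1 \<in> H \<longrightarrow> (\<forall>n \<in> H. dec n (h n) = v)) \<and>
          (\<forall>t. (\<Sum>s<t. msgs_at N C sendf adv (bb_input v) s) \<le> mc) \<and>
          (\<forall>t. (\<Sum>s<t. sigs_at N C sendf adv (bb_input v) s) \<le> sc)))"

text \<open>Decision at the end of a round: Unmarked, or Marked d (d = None is \<bottom>).\<close>
datatype mdec = Unmarked | Marked "nat option"

text \<open>The marked process of round r, computed from the histories h at the
beginning of round r (i.e. the end of round r-1).\<close>
definition marked_proc ::
  "nat \<Rightarrow> nat set \<Rightarrow> (nat \<Rightarrow> hist \<Rightarrow> mdec) \<Rightarrow> nat \<Rightarrow> (nat \<Rightarrow> hist) \<Rightarrow> nat option" where
  "marked_proc N C dec r h =
     (if r = 1 then (if 1 \<in> honest N C then Some 1 else None)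
      else if (\<exists>!n. n \<in> honest N C \<and> dec n (h n) \<noteq> Unmarked)
           then Some (THE n. n \<in> honest N C \<and> dec n (h n) \<noteq> Unmarked)
           else None)"

text \<open>Round r (1-based) consists of steps (r-1)T, ..., rT-1; at its first step
the marked process receives I r.\<close>
definition marker_input ::
  "nat \<Rightarrow> nat set \<Rightarrow> (nat \<Rightarrow> hist \<Rightarrow> mdec) \<Rightarrow> nat \<Rightarrow> nat \<Rightarrow> (nat \<Rightarrow> nat) \<Rightarrow> inpfn" where
  "marker_input N C dec T K I t h n =
     (if 0 < T \<and> t mod T = 0 \<and> t div T < K \<and> marked_proc N C dec (t div T + 1) h = Some n
      then Some (I (t div T + 1)) else None)"

definition solves_marker ::
  "nat \<Rightarrow> nat \<Rightarrow> nat \<Rightarrow> nat \<Rightarrow> nat \<Rightarrow> nat \<Rightarrow> sendfn \<Rightarrow> (nat \<Rightarrow> hist \<Rightarrow> mdec) \<Rightarrow> bool" where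
  "solves_marker N f K T mc sc sendf dec \<longleftrightarrow>
     valid_send N sendf \<and>
     (\<forall>I C adv. (\<forall>i \<in> {1..K}. I i \<in> {1..N}) \<and>
         f_adversary N f C sendf adv (marker_input N C dec T K I) \<longrightarrow>
        (let H = honest N C; inp = marker_input N C dec T K I in
         \<forall>i \<in> {1..K}.
          (let h = hists_at N C sendf adv inp (i * T);
               M = marked_proc N C dec i (hists_at N C sendf adv inp ((i - 1) * T)) in
           (\<forall>n \<in> H. \<forall>k. dec n (h n) = Marked (Some k) \<longrightarrow> k \<in> {1..N}) \<and>
           card {n \<in> H. dec n (h n) \<noteq> Unmarked} \<le> 1 \<and>
           (\<forall>m. M = Some m \<and> I i \<in> H \<longrightarrow> dec (I i) (h (I i)) = Marked (Some m)) \<and>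
           (M = None \<longrightarrow> (\<forall>n \<in> H. \<forall>k. dec n (h n) = Marked (Some k) \<longrightarrow> k \<notin> H)) \<and>
           (\<Sum>s \<in> {(i - 1) * T..<i * T}. msgs_at N C sendf adv inp s) \<le> mc \<and>
           (\<Sum>s \<in> {(i - 1) * T..<i * T}. sigs_at N C sendf adv inp s) \<le> sc)))"

end

theory Submission
  imports Defs "HOL-Combinatorics.Transposition"
begin

text \<open>Round i of the marker protocol is one run of the broadcast protocol whose broadcaster is
  the marked process of round i, with its destination as input; the process decided in that run
  is the broadcaster of round i + 1, so all honest processes agree on the broadcaster of every
  round. Relabelling the processes by the transposition of 1 and the broadcaster turns round i
  into an execution of the given protocol with broadcaster P_1, against a relabelled adversary
  with the same number of corrupted processes. Honest processes sign the pair (i, m) instead of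
  m, so this adversary obeys the signature rule: the real one cannot reuse honest signatures from
  earlier rounds. Consistency, liveness and non-impersonation of the marker then follow from
  consistency and validity of the broadcast (the marked process inputs its destination, and
  without a marked process the input 0 is not a process), and the messages and signatures of a
  round are exactly those of one broadcast.\<close>

section \<open>Relabelled, round-tagged messages\<close>

lemma transpose_in_atLeastAtMost:
  "a \<in> {m..n} \<Longrightarrow> b \<in> {m..n} \<Longrightarrow> x \<in> {m..n} \<Longrightarrow> transpose a b x \<in> {m..n}"
  by (auto simp: transpose_def)

lemma transpose_eq_swap: "transpose a b x = y \<longleftrightarrow> x = transpose a b y"
  by auto

lemma mem_image_transpose_iff: "x \<in> transpose a b ` A \<longleftrightarrow> transpose a b x \<in> A"
  by (metis image_iff transpose_involutory)

lemma transpose_atLeastAtMost_image: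
  "a \<in> {m..n} \<Longrightarrow> b \<in> {m..n} \<Longrightarrow> transpose a b ` {m..n} = {m..n}"
  by (rule transpose_image_eq) simp

fun tagged :: "nat \<Rightarrow> msg \<Rightarrow> bool" where
  "tagged i (Atom a) = True"
| "tagged i (MPair x y) = (tagged i x \<and> tagged i y)"
| "tagged i (Sig (MPair (Atom j) y) k) = (j = i \<and> tagged i y)"
| "tagged i (Sig _ k) = False"

fun tag_msg :: "nat \<Rightarrow> nat \<Rightarrow> msg \<Rightarrow> msg" where
  "tag_msg i b (Atom a) = Atom a"
| "tag_msg i b (MPair x y) = MPair (tag_msg i b x) (tag_msg i b y)"
| "tag_msg i b (Sig x k) = Sig (MPair (Atom i) (tag_msg i b x)) (transpose 1 b k)"

fun untag_msg :: "nat \<Rightarrow> nat \<Rightarrow> msg \<Rightarrow> msg" where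
  "untag_msg i b (Atom a) = Atom a"
| "untag_msg i b (MPair x y) = MPair (untag_msg i b x) (untag_msg i b y)"
| "untag_msg i b (Sig (MPair (Atom j) y) k) =
     (if j = i \<and> tagged i y then Sig (untag_msg i b y) (transpose 1 b k) else Atom 0)"
| "untag_msg i b (Sig _ k) = Atom 0"

lemma tagged_tag_msg: "tagged i (tag_msg i b m)"
  by (induction m) auto

lemma untag_tag_msg [simp]: "untag_msg i b (tag_msg i b m) = m"
  by (induction m) (auto simp: tagged_tag_msg)

lemma tag_untag_msg: "tagged i m \<Longrightarrow> tag_msg i b (untag_msg i b m) = m"
  by (induction i b m rule: untag_msg.induct) auto

lemma sigcount_tag_msg [simp]: "sigcount (tag_msg i b m) = sigcount m"
  by (induction m) auto

lemma untag_tag_relabelled [simp]: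
  "(\<lambda>(j, m). (transpose a c j, untag_msg i b m)) \<circ> (\<lambda>(j, m). (transpose a c j, tag_msg i b m)) = id"
  by (auto simp: fun_eq_iff)

lemma Sig_in_subterms_tag_msgD:
  "Sig x k \<in> subterms (tag_msg i b m) \<Longrightarrow>
   \<exists>y k'. Sig y k' \<in> subterms m \<and> x = MPair (Atom i) (tag_msg i b y) \<and> k = transpose 1 b k'"
  by (induction m) auto

lemma Sig_in_subterms_untag_msgD:
  "Sig x k \<in> subterms (untag_msg i b m) \<Longrightarrow>
   \<exists>y k'. Sig (MPair (Atom i) y) k' \<in> subterms m \<and> tagged i y \<and> x = untag_msg i b y
     \<and> k = transpose 1 b k'"
  by (induction i b m rule: untag_msg.induct) (auto split: if_splits)

lemma Sig_in_subterms_untag_tag_msg: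
  "Sig (MPair (Atom i) y) k \<in> subterms (tag_msg i b m) \<Longrightarrow>
   Sig (untag_msg i b y) (transpose 1 b k) \<in> subterms m"
  by (induction m) (auto simp: tagged_tag_msg)

lemma hists_run: "fst (run N C sf adv inp t) n =
  map (\<lambda>r. (inp r (fst (run N C sf adv inp r)) n, deliver N (snd (run N C sf adv inp r)) n)) [0..<t]"
  by (induction t) (auto simp: Let_def)

lemma hists_run_Suc: "fst (run N C sf adv inp (Suc t)) n = fst (run N C sf adv inp t) n @
   [(inp t (fst (run N C sf adv inp t)) n, deliver N (snd (run N C sf adv inp t)) n)]"
  by (simp add: Let_def)

lemma sent_run_Suc: "snd (run N C sf adv inp (Suc t)) n =
  (if n \<in> C then adv t n else sf n (fst (run N C sf adv inp (Suc t)) n))"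
  by (simp add: Let_def)

declare run.simps(2) [simp del]

lemma length_hists_run [simp]: "length (fst (run N C sf adv inp t) n) = t"
  by (simp add: hists_run)

lemma take_hists_run:
  "t' \<le> t \<Longrightarrow> take t' (fst (run N C sf adv inp t) n) = fst (run N C sf adv inp t') n"
  by (simp add: hists_run take_map min_def)

lemma nth_hists_run: "r < t \<Longrightarrow> fst (run N C sf adv inp t) n ! r =
   (inp r (fst (run N C sf adv inp r)) n, deliver N (snd (run N C sf adv inp r)) n)"
  by (simp add: hists_run)

lemma set_hists_run: "x \<in> set (fst (run N C sf adv inp t) n) \<longleftrightarrow>
   (\<exists>r<t. x = (inp r (fst (run N C sf adv inp r)) n, deliver N (snd (run N C sf adv inp r)) n))"
  by (auto simp: hists_run)

lemma deliver_memD: "(q, m) \<in> set (deliver N out n) \<Longrightarrow> q \<in> {1..N} \<and> (n, m) \<in> set (out q)"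
  by (auto simp: deliver_def)

lemma deliver_Nil [simp]: "deliver N (\<lambda>_. []) n = []"
  by (simp add: deliver_def)

lemma filter_sender_deliver:
  assumes "a \<in> {1..N}"
  shows "filter (\<lambda>(r, m). r = a) (deliver N out n) =
    map (\<lambda>(j, m). (a, m)) (filter (\<lambda>(j, m). j = n) (out a))"
proof -
  have "filter (\<lambda>(r, m). r = a) (deliver N out n) =
    concat (map (\<lambda>i. if i = a then map (\<lambda>(j, m). (a, m)) (filter (\<lambda>(j, m). j = n) (out a)) else [])
      [1..<Suc N])"
    unfolding deliver_def filter_concat map_map
    by (rule arg_cong[where f=concat], rule map_cong)
      (auto simp: filter_map o_def split_def filter_empty_conv)
  also have "\<dots> = map (\<lambda>(j, m). (a, m)) (filter (\<lambda>(j, m). j = n) (out a))"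
    using assms by (induction N) (auto simp: concat_eq_Nil_conv)
  finally show ?thesis .
qed

text \<open>Relabelled and untagged, an inbox must be re-sorted by (relabelled) sender, which is
  the order in which deliver lists messages.\<close>

definition untag_inbox :: "nat \<Rightarrow> nat \<Rightarrow> nat \<Rightarrow> (nat \<times> msg) list \<Rightarrow> (nat \<times> msg) list" where
  "untag_inbox N i b L =
     concat (map (\<lambda>q. map (\<lambda>(r, m). (q, untag_msg i b m)) (filter (\<lambda>(r, m). r = transpose 1 b q) L))
       [1..<Suc N])"

lemma deliver_relabel:
  assumes b: "b \<in> {1..N}"
    and out: "\<forall>q\<in>{1..N}.
      out' q = map (\<lambda>(j, m). (transpose 1 b j, untag_msg i b m)) (out (transpose 1 b q))"
  shows "deliver N out' p = untag_inbox N i b (deliver N out (transpose 1 b p))"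
  unfolding deliver_def[of N out'] untag_inbox_def
proof (rule arg_cong[where f=concat], rule map_cong[OF refl])
  fix q assume "q \<in> set [1..<Suc N]"
  then have q: "q \<in> {1..N}" "transpose 1 b q \<in> {1..N}"
    using b transpose_in_atLeastAtMost[of 1 1 N b q] by auto
  have "filter (\<lambda>(j, m). j = p) (out' q) =
    map (\<lambda>(j, m). (transpose 1 b j, untag_msg i b m))
      (filter (\<lambda>(j, m). transpose 1 b j = p) (out (transpose 1 b q)))"
    using out q(1) by (simp add: filter_map o_def split_def)
  also have "\<dots> = map (\<lambda>(j, m). (transpose 1 b j, untag_msg i b m))
      (filter (\<lambda>(j, m). j = transpose 1 b p) (out (transpose 1 b q)))"
    by (simp only: transpose_eq_swap[of 1 b])
  finally show "map (\<lambda>(j, m). (q, m)) (filter (\<lambda>(j, m). j = p) (out' q)) =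
    map (\<lambda>(r, m). (q, untag_msg i b m))
      (filter (\<lambda>(r, m). r = transpose 1 b q) (deliver N out (transpose 1 b p)))"
    unfolding filter_sender_deliver[OF q(2)] by (simp add: o_def split_def)
qed

lemma untag_inbox_memI:
  assumes "(q, m) \<in> set (deliver N out n)" "b \<in> {1..N}"
  shows "(transpose 1 b q, untag_msg i b m) \<in> set (untag_inbox N i b (deliver N out n))"
proof -
  have "transpose 1 b q \<in> {1..N}"
    using deliver_memD[OF assms(1)] assms(2) transpose_in_atLeastAtMost[of 1 1 N b q] by auto
  then show ?thesis
    using assms(1) unfolding untag_inbox_def by force
qed

lemma untag_inbox_memD:
  "(q, m') \<in> set (untag_inbox N i b L) \<Longrightarrow> \<exists>r m. (r, m) \<in> set L \<and> m' = untag_msg i b m"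
  by (auto simp: untag_inbox_def)

section \<open>The marker protocol\<close>

context
  fixes N T :: nat and sendB :: sendfn and decB :: "nat \<Rightarrow> hist \<Rightarrow> nat"
begin

text \<open>In round i with broadcaster b, process n runs the broadcast protocol as process
  transpose 1 b n. Its broadcast input is the destination it was given as marked process,
  or 0 if it was given none; the messages it receives at the first step of a round were
  sent in the previous round and are discarded.\<close>

definition bb_record :: "nat \<Rightarrow> nat \<Rightarrow> nat \<Rightarrow> bool \<Rightarrow> nat option \<times> (nat \<times> msg) list
    \<Rightarrow> nat option \<times> (nat \<times> msg) list" where
  "bb_record i b n first r =
     (if first \<and> n = b then Some (case fst r of Some x \<Rightarrow> x | None \<Rightarrow> 0) else None,
      if first then [] else untag_inbox N i b (snd r))"

definition bb_view :: "nat \<Rightarrow> nat \<Rightarrow> nat \<Rightarrow> hist \<Rightarrow> hist" where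
  "bb_view i b n hs = map (\<lambda>j. bb_record i b n (j = 0) (hs ! j)) [0..<length hs]"

definition round_window :: "nat \<Rightarrow> hist \<Rightarrow> hist" where
  "round_window r h = drop ((r - 1) * T) (take (r * T) h)"

fun broadcaster :: "nat \<Rightarrow> hist \<Rightarrow> nat \<Rightarrow> nat" where
  "broadcaster n h 0 = 1"
| "broadcaster n h (Suc r) = (if r = 0 then 1 else
     (let b = broadcaster n h r; w = decB (transpose 1 b n) (bb_view r b n (round_window r h)) in
      if w \<in> {1..N} then w else 1))"

definition round_outcome :: "nat \<Rightarrow> hist \<Rightarrow> nat \<Rightarrow> nat" where
  "round_outcome n h r =
     decB (transpose 1 (broadcaster n h r) n) (bb_view r (broadcaster n h r) n (round_window r h))"

definition marker_send :: sendfn where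
  "marker_send n h = (if h = [] then [] else
     (let i = (length h - 1) div T + 1; b = broadcaster n h i in
      map (\<lambda>(j, m). (transpose 1 b j, tag_msg i b m))
        (sendB (transpose 1 b n) (bb_view i b n (drop ((i - 1) * T) h)))))"

definition marker_dec :: "nat \<Rightarrow> hist \<Rightarrow> mdec" where
  "marker_dec n h = (let r = length h div T in
     if r = 0 then Unmarked
     else if round_outcome n h r = n then Marked (Some (broadcaster n h r)) else Unmarked)"

lemma marker_send_memD:
  assumes "(j, m) \<in> set (marker_send n h)"
  obtains i b j' m' where "i = (length h - 1) div T + 1" "b = broadcaster n h i"
    "(j', m') \<in> set (sendB (transpose 1 b n) (bb_view i b n (drop ((i - 1) * T) h)))"
    "j = transpose 1 b j'" "m = tag_msg i b m'"
  using assms by (auto simp: marker_send_def Let_def split: if_splits simp del: One_nat_def)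

lemma broadcaster_Suc:
  "0 < r \<Longrightarrow> broadcaster n h (Suc r) = (if round_outcome n h r \<in> {1..N} then round_outcome n h r else 1)"
  by (simp add: round_outcome_def Let_def)

lemma broadcaster_take: "broadcaster n h r = broadcaster n (take ((r - 1) * T) h) r"
proof (induction r arbitrary: h)
  case 0
  then show ?case by simp
next
  case (Suc r)
  show ?case
  proof (cases "r = 0")
    case True
    then show ?thesis by simp
  next
    case False
    have "broadcaster n h r = broadcaster n (take ((r - 1) * T) (take (r * T) h)) r"
      using Suc.IH by (simp add: min_def)
    also have "\<dots> = broadcaster n (take (r * T) h) r"
      using Suc.IH[of "take (r * T) h"] by simp
    finally show ?thesis
      using False by (simp add: Let_def round_window_def)
  qed
qed

lemma broadcaster_in_range: "1 \<le> N \<Longrightarrow> broadcaster n h r \<in> {1..N}"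
  by (induction r) (auto simp: Let_def broadcaster.simps(2))

declare broadcaster.simps(2) [simp del]

lemma length_bb_view [simp]: "length (bb_view i b n hs) = length hs"
  by (simp add: bb_view_def)

lemma nth_bb_view: "j < length hs \<Longrightarrow> bb_view i b n hs ! j = bb_record i b n (j = 0) (hs ! j)"
  by (simp add: bb_view_def)

lemma bb_view_Nil [simp]: "bb_view i b n [] = []"
  by (simp add: bb_view_def)

lemma bb_view_snoc: "bb_view i b n (hs @ [x]) = bb_view i b n hs @ [bb_record i b n (hs = []) x]"
  by (simp add: bb_view_def nth_append)

lemma Sig_in_bb_viewD:
  assumes "r \<in> set (bb_view i b n hs)" "(q, m) \<in> set (snd r)" "Sig y k \<in> subterms m"
  shows "\<exists>r'\<in>set hs. \<exists>(q', m')\<in>set (snd r').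
           Sig (MPair (Atom i) (tag_msg i b y)) (transpose 1 b k) \<in> subterms m'"
proof -
  obtain j where j: "j < length hs" and r: "r = bb_record i b n (j = 0) (hs ! j)"
    using assms(1) by (auto simp: bb_view_def)
  from assms(2) r have "(q, m) \<in> set (untag_inbox N i b (snd (hs ! j)))"
    by (auto simp: bb_record_def split: if_splits)
  then obtain q' m' where qm': "(q', m') \<in> set (snd (hs ! j))" and m: "m = untag_msg i b m'"
    using untag_inbox_memD by blast
  from assms(3) m obtain y' k' where "Sig (MPair (Atom i) y') k' \<in> subterms m'" "tagged i y'"
    "y = untag_msg i b y'" "k = transpose 1 b k'"
    using Sig_in_subterms_untag_msgD by blast
  then have "Sig (MPair (Atom i) (tag_msg i b y)) (transpose 1 b k) \<in> subterms m'"
    by (simp add: tag_untag_msg)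
  then show ?thesis
    using qm' j by (metis (no_types, lifting) case_prodI nth_mem)
qed

lemma valid_send_marker_send:
  assumes valid: "valid_send N sendB" and N: "1 \<le> N"
  shows "valid_send N marker_send"
  unfolding valid_send_def
proof (intro ballI allI, clarify)
  fix n h j m
  assume n: "n \<in> {1..N}" and jm: "(j, m) \<in> set (marker_send n h)"
  obtain i b j' m' where "i = (length h - 1) div T + 1" and b: "b = broadcaster n h i"
    and jm': "(j', m') \<in> set (sendB (transpose 1 b n) (bb_view i b n (drop ((i - 1) * T) h)))"
    and j: "j = transpose 1 b j'" and m: "m = tag_msg i b m'"
    using jm by (rule marker_send_memD)
  define hs where "hs = drop ((i - 1) * T) h"
  have b: "b \<in> {1..N}"
    using broadcaster_in_range[OF N] b by simp
  have "transpose 1 b n \<in> {1..N}"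
    using transpose_in_atLeastAtMost[of 1 1 N b n] b n by simp
  then have valid': "j' \<in> {1..N} \<and> (\<forall>x k. Sig x k \<in> subterms m' \<longrightarrow> k = transpose 1 b n \<or>
      (\<exists>r \<in> set (bb_view i b n hs). \<exists>(q, m'') \<in> set (snd r). Sig x k \<in> subterms m''))"
    using valid jm' unfolding valid_send_def hs_def by fastforce
  show "j \<in> {1..N} \<and> (\<forall>x k. Sig x k \<in> subterms m \<longrightarrow>
           k = n \<or> (\<exists>r \<in> set h. \<exists>(q, m'') \<in> set (snd r). Sig x k \<in> subterms m''))"
  proof (intro conjI allI impI)
    show "j \<in> {1..N}"
      using valid' j b transpose_in_atLeastAtMost[of 1 1 N b j'] by simp
  next
    fix x k assume "Sig x k \<in> subterms m"
    then obtain y k' where y: "Sig y k' \<in> subterms m'"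
      and x: "x = MPair (Atom i) (tag_msg i b y)" and k: "k = transpose 1 b k'"
      using Sig_in_subterms_tag_msgD m by blast
    from valid' y consider "k' = transpose 1 b n"
      | r q m'' where "r \<in> set (bb_view i b n hs)" "(q, m'') \<in> set (snd r)" "Sig y k' \<in> subterms m''"
      by blast
    then show "k = n \<or> (\<exists>r \<in> set h. \<exists>(q, m'') \<in> set (snd r). Sig x k \<in> subterms m'')"
    proof cases
      case 1
      then show ?thesis using k by simp
    next
      case 2
      have "set hs \<subseteq> set h"
        by (simp add: hs_def set_drop_subset)
      then show ?thesis
        using Sig_in_bb_viewD[OF 2] x k by blast
    qed
  qed
qed

end

lemma marked_proc_SomeD:
  assumes "marked_proc N C dec r h = Some m" "r \<noteq> 1"
  shows "m \<in> honest N C \<and> dec m (h m) \<noteq> Unmarked"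
proof -
  from assms have "\<exists>!n. n \<in> honest N C \<and> dec n (h n) \<noteq> Unmarked"
    and "m = (THE n. n \<in> honest N C \<and> dec n (h n) \<noteq> Unmarked)"
    by (auto simp: marked_proc_def split: if_splits)
  then show ?thesis
    using theI'[of "\<lambda>n. n \<in> honest N C \<and> dec n (h n) \<noteq> Unmarked"] by simp
qed

lemma marked_proc_honest: "marked_proc N C dec r h = Some m \<Longrightarrow> m \<in> honest N C"
  using marked_proc_SomeD[of N C dec r h m] by (cases "r = 1") (auto simp: marked_proc_def split: if_splits)

locale marker_execution =
  fixes N f T mc sc K :: nat and V :: "nat set" and sendB :: sendfn and decB :: "nat \<Rightarrow> hist \<Rightarrow> nat"
    and I :: "nat \<Rightarrow> nat" and C :: "nat set" and adv :: advfn
  assumes broadcast_protocol: "solves_BB N f V T mc sc sendB decB"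
    and T_pos: "0 < T" and N_pos: "1 \<le> N" and processes_in_V: "{1..N} \<subseteq> V" and zero_in_V: "0 \<in> V"
    and destinations: "\<forall>i\<in>{1..K}. I i \<in> {1..N}"
    and f_adversary: "f_adversary N f C (marker_send N T sendB decB) adv
      (marker_input N C (marker_dec N T decB) T K I)"
begin

abbreviation "send_M \<equiv> marker_send N T sendB decB"
abbreviation "dec_M \<equiv> marker_dec N T decB"
abbreviation "inp_M \<equiv> marker_input N C dec_M T K I"
abbreviation "hist_M t \<equiv> fst (run N C send_M adv inp_M t)"
abbreviation "out_M t \<equiv> snd (run N C send_M adv inp_M t)"
abbreviation "H \<equiv> honest N C"

lemma corrupt_subset: "C \<subseteq> {1..N}"
  and card_corrupt: "card C \<le> f"
  and admissible: "admissible_adv N C send_M adv inp_M"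
  using f_adversary by (auto simp: f_adversary_def)

lemma honest_notin_corrupt: "n \<in> H \<Longrightarrow> n \<notin> C"
  and honest_in_range: "n \<in> H \<Longrightarrow> n \<in> {1..N}"
  by (auto simp: honest_def)

lemma adversary_send:
  assumes "(j, m) \<in> set (adv t c)" "c \<in> C"
  shows "j \<in> {1..N} \<and> (\<forall>x k. Sig x k \<in> subterms m \<longrightarrow> k \<in> C \<or>
    (\<exists>c' \<in> C. \<exists>r \<in> set (hists_at N C send_M adv inp_M (Suc t) c'). \<exists>(q, m') \<in> set (snd r).
      Sig x k \<in> subterms m'))"
proof -
  have "\<forall>(j, m) \<in> set (adv t c). j \<in> {1..N} \<and> (\<forall>x k. Sig x k \<in> subterms m \<longrightarrow> k \<in> C \<or>
    (\<exists>c' \<in> C. \<exists>r \<in> set (hists_at N C send_M adv inp_M (Suc t) c'). \<exists>(q, m') \<in> set (snd r).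
      Sig x k \<in> subterms m'))"
    using admissible assms(2) unfolding admissible_adv_def by blast
  with assms(1) show ?thesis by blast
qed

lemma adversary_Sig_source:
  assumes "(j, m) \<in> set (adv t c)" "c \<in> C" "Sig x k \<in> subterms m" "k \<notin> C"
  shows "\<exists>c'\<in>C. \<exists>r\<le>t. \<exists>q m'. (q, m') \<in> set (deliver N (out_M r) c') \<and> Sig x k \<in> subterms m'"
proof -
  obtain c' r q m' where c': "c' \<in> C" and r: "r \<in> set (hist_M (Suc t) c')"
    and qm: "(q, m') \<in> set (snd r)" and sig: "Sig x k \<in> subterms m'"
    using adversary_send[OF assms(1,2)] assms(3,4) unfolding hists_at_def by blast
  from r obtain r' where "r' \<le> t" "r = (inp_M r' (hist_M r') c', deliver N (out_M r') c')"
    unfolding set_hists_run less_Suc_eq_le by blast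
  with c' qm sig show ?thesis by auto
qed

text \<open>Honest processes only sign with the tag of their current round and the adversary can
  only copy their signatures, so no honest signature carries the tag of a later round.\<close>

lemma honest_Sig_tag_le_round:
  "n \<in> {1..N} \<Longrightarrow> (j, m) \<in> set (out_M (Suc s) n) \<Longrightarrow>
   Sig (MPair (Atom j') y) k \<in> subterms m \<Longrightarrow> k \<notin> C \<Longrightarrow> j' \<le> s div T + 1"
proof (induction s arbitrary: n j m rule: less_induct)
  case (less s)
  show ?case
  proof (cases "n \<in> C")
    case True
    then have "(j, m) \<in> set (adv s n)"
      using less.prems(2) by (simp add: sent_run_Suc)
    from adversary_Sig_source[OF this True less.prems(3,4)]
    obtain c' r q m' where "r \<le> s" and qm: "(q, m') \<in> set (deliver N (out_M r) c')"
      and sig: "Sig (MPair (Atom j') y) k \<in> subterms m'" by blast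
    moreover from qm obtain r' where r': "r = Suc r'"
      by (cases r) auto
    ultimately have "r' < s" "q \<in> {1..N}" "(c', m') \<in> set (out_M (Suc r') q)"
      using deliver_memD by auto
    from less.IH[OF this sig less.prems(4)] have "j' \<le> r' div T + 1" .
    also have "\<dots> \<le> s div T + 1"
      using \<open>r' < s\<close> by (simp add: div_le_mono)
    finally show ?thesis .
  next
    case False
    have "(j, m) \<in> set (send_M n (hist_M (Suc s) n))"
      using less.prems(2) False by (simp add: sent_run_Suc)
    then obtain b m' where "m = tag_msg (s div T + 1) b m'"
      by (rule marker_send_memD) simp
    with less.prems(3) show ?thesis
      using Sig_in_subterms_tag_msgD by fastforce
  qed
qed

end

section \<open>One round of the marker protocol is a broadcast\<close>

text \<open>Suppose all honest processes agree that b is the broadcaster of round i. Relabelled by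
  the transposition of 1 and b and with the round tags removed, round i is an execution of the
  broadcast protocol with input v_B, corrupted set C_B and an adversary that forwards what the
  real adversary sends during round i.\<close>

locale marker_round = marker_execution +
  fixes i b :: nat
  assumes round_pos: "1 \<le> i" and broadcaster_range: "b \<in> {1..N}"
    and broadcaster_agreed: "\<forall>n\<in>H. broadcaster N T decB n (hist_M ((i - 1) * T) n) i = b"
    and marked_is_broadcaster: "\<forall>m. marked_proc N C dec_M i (hist_M ((i - 1) * T)) = Some m \<longrightarrow> m = b"
begin

abbreviation "start \<equiv> (i - 1) * T"
abbreviation "C_B \<equiv> transpose 1 b ` C"

definition adv_B :: advfn where
  "adv_B s c = (if s < T
     then map (\<lambda>(j, m). (transpose 1 b j, untag_msg i b m)) (adv (start + s) (transpose 1 b c)) else [])"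

definition v_B :: nat where
  "v_B = (case inp_M start (hist_M start) b of Some x \<Rightarrow> x | None \<Rightarrow> 0)"

abbreviation "hist_B t \<equiv> fst (run N C_B sendB adv_B (bb_input v_B) t)"
abbreviation "out_B t \<equiv> snd (run N C_B sendB adv_B (bb_input v_B) t)"

lemma round_end: "i * T = start + T"
  using round_pos by (cases i) auto

lemma round_of_step: "s < T \<Longrightarrow> (start + s) div T = i - 1"
  using T_pos by simp

lemma honest_B: "honest N C_B = transpose 1 b ` H"
proof -
  have "transpose 1 b ` H = transpose 1 b ` {1..N} - C_B"
    unfolding honest_def by (rule image_set_diff[OF inj_transpose])
  then show ?thesis
    using transpose_atLeastAtMost_image[of 1 1 N b] broadcaster_range by (simp add: honest_def)
qed

lemma broadcaster_honest: "n \<in> H \<Longrightarrow> start \<le> t \<Longrightarrow> broadcaster N T decB n (hist_M t n) i = b"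
  using broadcaster_agreed broadcaster_take[of N T decB n "hist_M t n" i] take_hists_run[of start t]
  by simp

lemma honest_sent:
  assumes n: "n \<in> H" and s: "s < T"
  shows "out_M (Suc (start + s)) n = map (\<lambda>(j, m). (transpose 1 b j, tag_msg i b m))
    (sendB (transpose 1 b n) (bb_view N i b n (drop start (hist_M (Suc (start + s)) n))))"
proof -
  have "hist_M (Suc (start + s)) n \<noteq> []"
    by (metis length_hists_run list.size(3) nat.distinct(1))
  moreover have "(length (hist_M (Suc (start + s)) n) - 1) div T + 1 = i"
    using round_of_step[OF s] round_pos by simp
  moreover have "broadcaster N T decB n (hist_M (Suc (start + s)) n) i = b"
    by (rule broadcaster_honest[OF n]) simp
  ultimately show ?thesis
    using honest_notin_corrupt[OF n] by (simp add: sent_run_Suc marker_send_def Let_def)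
qed

lemma out_B_eq:
  assumes s: "s < T"
    and hist_B: "\<forall>p. transpose 1 b p \<in> H \<longrightarrow>
      hist_B (Suc s) p = bb_view N i b (transpose 1 b p) (drop start (hist_M (start + Suc s) (transpose 1 b p)))"
    and q: "q \<in> {1..N}"
  shows "out_B (Suc s) q =
    map (\<lambda>(j, m). (transpose 1 b j, untag_msg i b m)) (out_M (start + Suc s) (transpose 1 b q))"
proof (cases "transpose 1 b q \<in> C")
  case True
  then show ?thesis
    using s by (simp add: sent_run_Suc adv_B_def mem_image_transpose_iff)
next
  case False
  then have qH: "transpose 1 b q \<in> H"
    using transpose_in_atLeastAtMost[of 1 1 N b q] broadcaster_range q by (simp add: honest_def)
  then show ?thesis
    using False hist_B honest_sent[OF qH s] by (simp add: sent_run_Suc mem_image_transpose_iff)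
qed

lemma hist_B_eq:
  "s \<le> T \<Longrightarrow> hist_B s p = bb_view N i b (transpose 1 b p) (drop start (hist_M (start + s) (transpose 1 b p)))"
proof (induction s arbitrary: p)
  case 0
  then show ?case by simp
next
  case (Suc s)
  let ?n = "transpose 1 b p"
  have IH: "\<forall>p. hist_B s p = bb_view N i b (transpose 1 b p) (drop start (hist_M (start + s) (transpose 1 b p)))"
    using Suc by simp
  have inp: "bb_input v_B s (hist_B s) p = (if s = 0 \<and> ?n = b
      then Some (case inp_M (start + s) (hist_M (start + s)) ?n of Some x \<Rightarrow> x | None \<Rightarrow> 0) else None)"
    by (auto simp: bb_input_def v_B_def transpose_eq_iff)
  have dl: "deliver N (out_B s) p = (if s = 0 then [] else untag_inbox N i b (deliver N (out_M (start + s)) ?n))"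
  proof (cases s)
    case 0
    then show ?thesis by simp
  next
    case (Suc s')
    have "\<forall>q\<in>{1..N}. out_B (Suc s') q =
        map (\<lambda>(j, m). (transpose 1 b j, untag_msg i b m)) (out_M (start + Suc s') (transpose 1 b q))"
      using out_B_eq[of s'] IH Suc \<open>Suc s \<le> T\<close> by simp
    then have "deliver N (out_B (Suc s')) p = untag_inbox N i b (deliver N (out_M (start + Suc s')) ?n)"
      by (rule deliver_relabel[OF broadcaster_range])
    then show ?thesis
      using Suc by simp
  qed
  have window: "drop start (hist_M (start + Suc s) ?n) = drop start (hist_M (start + s) ?n) @
      [(inp_M (start + s) (hist_M (start + s)) ?n, deliver N (out_M (start + s)) ?n)]"
    using hists_run_Suc[of N C send_M adv inp_M "start + s" ?n] by simp
  have "drop start (hist_M (start + s) ?n) = [] \<longleftrightarrow> s = 0"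
    by simp
  then show ?case
    unfolding hists_run_Suc[of _ _ _ _ _ s] inp dl window bb_view_snoc IH[rule_format, of p]
    by (simp add: bb_record_def)
qed

lemma Sig_tagged_sent_in_round:
  assumes "q \<in> {1..N}" "(c, m) \<in> set (out_M (Suc s) q)"
    and "Sig (MPair (Atom i) y) k \<in> subterms m" "k \<notin> C" "Suc s \<le> start + T"
  shows "\<exists>s'<T. s = start + s'"
proof -
  have "i \<le> s div T + 1"
    using honest_Sig_tag_le_round[OF assms(1-4)] .
  then have "start \<le> s"
    using T_pos by (metis add_diff_cancel_right' diff_le_mono less_mult_imp_div_less not_le)
  then show ?thesis
    using assms(5) by (metis add_less_cancel_left le_add_diff_inverse less_eq_Suc_le)
qed

text \<open>An honest signature with tag i that a corrupted process has received by the end of round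
  i was already received by some corrupted process during round i: by the tag bound, it was first
  sent by an honest process, and this happened in round i.\<close>

lemma round_Sig_exposure:
  "r \<le> start + T \<Longrightarrow> c \<in> C \<Longrightarrow> (q, m) \<in> set (deliver N (out_M r) c) \<Longrightarrow>
   Sig (MPair (Atom i) y) k \<in> subterms m \<Longrightarrow> k \<notin> C \<Longrightarrow>
   \<exists>r'. start < r' \<and> r' \<le> r \<and> (\<exists>c'\<in>C. \<exists>q' m'. (q', m') \<in> set (deliver N (out_M r') c') \<and>
      Sig (untag_msg i b y) (transpose 1 b k) \<in> subterms (untag_msg i b m'))"
proof (induction r arbitrary: c q m rule: less_induct)
  case (less r)
  obtain s where r: "r = Suc s"
    using less.prems(3) by (cases r) auto
  with less.prems(3) have q: "q \<in> {1..N}" and cm: "(c, m) \<in> set (out_M (Suc s) q)"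
    using deliver_memD by auto
  obtain s' where "s' < T" and s': "s = start + s'"
    using Sig_tagged_sent_in_round[OF q cm less.prems(4,5)] less.prems(1) r by blast
  show ?case
  proof (cases "q \<in> C")
    case True
    then have "(c, m) \<in> set (adv s q)"
      using cm by (simp add: sent_run_Suc)
    from adversary_Sig_source[OF this True less.prems(4,5)]
    obtain c'' r'' q'' m'' where "c'' \<in> C" "r'' \<le> s" "(q'', m'') \<in> set (deliver N (out_M r'') c'')"
      "Sig (MPair (Atom i) y) k \<in> subterms m''" by blast
    moreover have "r'' < r" "r'' \<le> start + T"
      using \<open>r'' \<le> s\<close> r less.prems(1) by auto
    ultimately show ?thesis
      using less.IH[of r''] less.prems(5) by (meson order.trans less_imp_le)
  next
    case False
    then have "q \<in> H"
      using q by (simp add: honest_def)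
    with cm honest_sent[OF _ \<open>s' < T\<close>] s' obtain m' where "m = tag_msg i b m'"
      by auto
    then have "Sig (untag_msg i b y) (transpose 1 b k) \<in> subterms (untag_msg i b m)"
      using Sig_in_subterms_untag_tag_msg less.prems(4) by simp
    moreover have "start < r"
      using r s' by simp
    ultimately show ?thesis
      using less.prems(2,3) by blast
  qed
qed

lemma corrupt_inbox_in_hist_B:
  assumes t: "t < T" and r: "start < r" "r \<le> start + t" and "c \<in> C"
    and qm: "(q, m) \<in> set (deliver N (out_M r) c)"
  shows "\<exists>rec\<in>set (hists_at N C_B sendB adv_B (bb_input v_B) (Suc t) (transpose 1 b c)).
    (transpose 1 b q, untag_msg i b m) \<in> set (snd rec)"
proof -
  define j where "j = r - start"
  define hs where "hs = drop start (hist_M (start + Suc t) c)"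
  have j: "0 < j" "j < length hs" "r = start + j"
    using r by (auto simp: j_def hs_def)
  have hist: "hists_at N C_B sendB adv_B (bb_input v_B) (Suc t) (transpose 1 b c) = bb_view N i b c hs"
    unfolding hists_at_def hs_def using hist_B_eq[of "Suc t" "transpose 1 b c"] t by simp
  have "hs ! j = (inp_M r (hist_M r) c, deliver N (out_M r) c)"
    using j by (simp add: hs_def nth_hists_run)
  then have "snd (bb_view N i b c hs ! j) = untag_inbox N i b (deliver N (out_M r) c)"
    using j by (simp add: nth_bb_view bb_record_def)
  moreover have "bb_view N i b c hs ! j \<in> set (bb_view N i b c hs)"
    using j by simp
  ultimately show ?thesis
    unfolding hist using untag_inbox_memI[OF qm broadcaster_range] by metis
qed

lemma adv_B_Sig_known:
  assumes t: "t < T" and c: "c \<in> C" and jm: "(j, m) \<in> set (adv (start + t) c)"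
    and "Sig x k \<in> subterms (untag_msg i b m)"
  shows "k \<in> C_B \<or> (\<exists>c'\<in>C_B. \<exists>r\<in>set (hists_at N C_B sendB adv_B (bb_input v_B) (Suc t) c').
    \<exists>(q, m')\<in>set (snd r). Sig x k \<in> subterms m')"
proof (cases "transpose 1 b k \<in> C")
  case True
  then show ?thesis
    by (simp add: mem_image_transpose_iff)
next
  case False
  obtain y k' where sig: "Sig (MPair (Atom i) y) k' \<in> subterms m"
    and x: "x = untag_msg i b y" and k: "k = transpose 1 b k'"
    using Sig_in_subterms_untag_msgD assms(4) by blast
  have "k' \<notin> C"
    using False k by simp
  obtain c'' r'' q'' m'' where "c'' \<in> C" "r'' \<le> start + t"
    "(q'', m'') \<in> set (deliver N (out_M r'') c'')" "Sig (MPair (Atom i) y) k' \<in> subterms m''"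
    using adversary_Sig_source[OF jm c sig \<open>k' \<notin> C\<close>] by blast
  moreover have "r'' \<le> start + T"
    using \<open>r'' \<le> start + t\<close> t by simp
  ultimately obtain r c_r q_r m_r where "start < r" "r \<le> start + t" "c_r \<in> C"
    and qm: "(q_r, m_r) \<in> set (deliver N (out_M r) c_r)"
    and "Sig x k \<in> subterms (untag_msg i b m_r)"
    using round_Sig_exposure[of r'' c'' q'' m'' y k'] \<open>k' \<notin> C\<close> x k by (meson order.trans)
  moreover have "transpose 1 b c_r \<in> C_B"
    using \<open>c_r \<in> C\<close> by (simp add: mem_image_transpose_iff)
  ultimately show ?thesis
    using corrupt_inbox_in_hist_B[OF t _ _ _ qm] by fastforce
qed

lemma admissible_adv_B: "admissible_adv N C_B sendB adv_B (bb_input v_B)"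
  unfolding admissible_adv_def
proof (intro allI ballI case_prodI2)
  fix t c x j m
  assume c: "c \<in> C_B" and "x \<in> set (adv_B t c)" and "x = (j, m)"
  then have jm: "(j, m) \<in> set (adv_B t c)"
    by simp
  then have t: "t < T"
    by (auto simp: adv_B_def split: if_splits)
  with jm obtain j' m' where jm': "(j', m') \<in> set (adv (start + t) (transpose 1 b c))"
    and j: "j = transpose 1 b j'" and m: "m = untag_msg i b m'"
    by (auto simp: adv_B_def simp del: One_nat_def)
  have c': "transpose 1 b c \<in> C"
    using c by (simp add: mem_image_transpose_iff)
  have "j \<in> {1..N}"
    using adversary_send[OF jm' c'] j transpose_in_atLeastAtMost[of 1 1 N b j'] broadcaster_range
    by simp
  then show "j \<in> {1..N} \<and> (\<forall>x k. Sig x k \<in> subterms m \<longrightarrow> k \<in> C_B \<or>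
     (\<exists>c'\<in>C_B. \<exists>r\<in>set (hists_at N C_B sendB adv_B (bb_input v_B) (Suc t) c').
        \<exists>(q, m'')\<in>set (snd r). Sig x k \<in> subterms m''))"
    using adv_B_Sig_known[OF t c' jm'] m by blast
qed

lemma f_adversary_B: "f_adversary N f C_B sendB adv_B (bb_input v_B)"
proof -
  have "C_B \<subseteq> {1..N}"
    using corrupt_subset broadcaster_range transpose_in_atLeastAtMost[of 1 1 N b] by auto
  moreover have "card C_B \<le> f"
    using card_corrupt by (simp add: card_image)
  ultimately show ?thesis
    using admissible_adv_B by (simp add: f_adversary_def)
qed

lemma v_B_in_V: "v_B \<in> V"
proof (cases "inp_M start (hist_M start) b")
  case None
  then show ?thesis
    using zero_in_V by (simp add: v_B_def)
next
  case (Some x)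
  moreover have "start div T + 1 = i"
    using T_pos round_pos by simp
  ultimately have "x = I i" "i \<le> K"
    by (auto simp: marker_input_def split: if_splits)
  then show ?thesis
    using Some destinations processes_in_V round_pos by (auto simp: v_B_def)
qed

lemma
  broadcast_agreement:
    "p \<in> honest N C_B \<Longrightarrow> p' \<in> honest N C_B \<Longrightarrow> decB p (hist_B T p) = decB p' (hist_B T p')"
  and broadcast_validity: "1 \<in> honest N C_B \<Longrightarrow> p \<in> honest N C_B \<Longrightarrow> decB p (hist_B T p) = v_B"
  and broadcast_message_bound: "(\<Sum>s<t. msgs_at N C_B sendB adv_B (bb_input v_B) s) \<le> mc"
  and broadcast_signature_bound: "(\<Sum>s<t. sigs_at N C_B sendB adv_B (bb_input v_B) s) \<le> sc"
  using broadcast_protocol v_B_in_V f_adversary_B unfolding solves_BB_def Let_def hists_at_def by blast+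

lemma round_outcome_eq:
  assumes "n \<in> H"
  shows "round_outcome N T decB n (hist_M (i * T) n) i = decB (transpose 1 b n) (hist_B T (transpose 1 b n))"
proof -
  have "broadcaster N T decB n (hist_M (i * T) n) i = b"
    using broadcaster_honest[OF assms] round_end by simp
  moreover have "round_window T i (hist_M (i * T) n) = drop start (hist_M (start + T) n)"
    using round_end by (simp add: round_window_def)
  ultimately show ?thesis
    using hist_B_eq[of T "transpose 1 b n"] by (simp add: round_outcome_def)
qed

lemma relabelled_honest: "n \<in> H \<Longrightarrow> transpose 1 b n \<in> honest N C_B"
  unfolding honest_B by (rule imageI)

lemma round_outcome_agreement:
  "n \<in> H \<Longrightarrow> n' \<in> H \<Longrightarrow>
   round_outcome N T decB n (hist_M (i * T) n) i = round_outcome N T decB n' (hist_M (i * T) n') i"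
  unfolding round_outcome_eq by (intro broadcast_agreement relabelled_honest)

lemma round_outcome_validity:
  "b \<in> H \<Longrightarrow> n \<in> H \<Longrightarrow> round_outcome N T decB n (hist_M (i * T) n) i = v_B"
  unfolding round_outcome_eq using relabelled_honest[of b] by (intro broadcast_validity relabelled_honest) simp_all

lemma marker_dec_round_end:
  assumes "n \<in> H"
  shows "dec_M n (hist_M (i * T) n) =
    (if round_outcome N T decB n (hist_M (i * T) n) i = n then Marked (Some b) else Unmarked)"
proof -
  have "broadcaster N T decB n (hist_M (i * T) n) i = b"
    using broadcaster_honest[OF assms] round_end by simp
  then show ?thesis
    using T_pos round_pos by (simp add: marker_dec_def Let_def)
qed

lemma sent_at_eq:
  assumes n: "n \<in> H" and s: "s < T"
  shows "sent_at N C send_M adv inp_M (start + s) n = map (\<lambda>(j, m). (transpose 1 b j, tag_msg i b m))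
    (sent_at N C_B sendB adv_B (bb_input v_B) s (transpose 1 b n))"
proof -
  have "transpose 1 b n \<notin> C_B"
    using honest_notin_corrupt[OF n] by (simp add: mem_image_transpose_iff)
  then have "sent_at N C_B sendB adv_B (bb_input v_B) s (transpose 1 b n) =
      sendB (transpose 1 b n) (bb_view N i b n (drop start (hist_M (Suc (start + s)) n)))"
    using hist_B_eq[of "Suc s" "transpose 1 b n"] s by (simp add: sent_at_def sent_run_Suc)
  then show ?thesis
    unfolding sent_at_def honest_sent[OF n s] by simp
qed

lemma msgs_at_eq:
  assumes "s < T"
  shows "msgs_at N C send_M adv inp_M (start + s) = msgs_at N C_B sendB adv_B (bb_input v_B) s"
proof -
  have "msgs_at N C send_M adv inp_M (start + s) =
      (\<Sum>n\<in>H. length (sent_at N C_B sendB adv_B (bb_input v_B) s (transpose 1 b n)))"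
    unfolding msgs_at_def by (rule sum.cong[OF refl]) (simp only: sent_at_eq[OF _ assms] length_map)
  then show ?thesis
    unfolding msgs_at_def honest_B by (simp add: sum.reindex)
qed

lemma sigs_at_eq:
  assumes "s < T"
  shows "sigs_at N C send_M adv inp_M (start + s) = sigs_at N C_B sendB adv_B (bb_input v_B) s"
proof -
  have "sigs_at N C send_M adv inp_M (start + s) = (\<Sum>n\<in>H.
      sum_list (map (\<lambda>(j, m). sigcount m) (sent_at N C_B sendB adv_B (bb_input v_B) s (transpose 1 b n))))"
    unfolding sigs_at_def
    by (rule sum.cong[OF refl]) (simp only: sent_at_eq[OF _ assms] map_map o_def split_def snd_conv sigcount_tag_msg)
  then show ?thesis
    unfolding sigs_at_def honest_B by (simp add: sum.reindex)
qed

lemma sum_round: "(\<Sum>s\<in>{start..<i * T}. g s) = (\<Sum>s<T. g (start + s))"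
  unfolding round_end using sum.shift_bounds_nat_ivl[of g 0 start T]
  by (simp add: atLeast0LessThan add.commute)

lemma round_message_bound: "(\<Sum>s\<in>{start..<i * T}. msgs_at N C send_M adv inp_M s) \<le> mc"
proof -
  have "(\<Sum>s<T. msgs_at N C send_M adv inp_M (start + s)) = (\<Sum>s<T. msgs_at N C_B sendB adv_B (bb_input v_B) s)"
    by (rule sum.cong[OF refl]) (rule msgs_at_eq, simp)
  then show ?thesis
    unfolding sum_round using broadcast_message_bound by simp
qed

lemma round_signature_bound: "(\<Sum>s\<in>{start..<i * T}. sigs_at N C send_M adv inp_M s) \<le> sc"
proof -
  have "(\<Sum>s<T. sigs_at N C send_M adv inp_M (start + s)) = (\<Sum>s<T. sigs_at N C_B sendB adv_B (bb_input v_B) s)"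
    by (rule sum.cong[OF refl]) (rule sigs_at_eq, simp)
  then show ?thesis
    unfolding sum_round using broadcast_signature_bound by simp
qed

lemma marked_previous_in_range:
  "n \<in> H \<Longrightarrow> dec_M n (hist_M (i * T) n) = Marked (Some k) \<Longrightarrow> k \<in> {1..N}"
  using marker_dec_round_end broadcaster_range by (simp split: if_splits)

lemma card_marked_le_1: "card {n \<in> H. dec_M n (hist_M (i * T) n) \<noteq> Unmarked} \<le> 1"
proof (cases "H = {}")
  case True
  then show ?thesis by simp
next
  case False
  then obtain n0 where n0: "n0 \<in> H"
    by blast
  have "{n \<in> H. dec_M n (hist_M (i * T) n) \<noteq> Unmarked} \<subseteq> {round_outcome N T decB n0 (hist_M (i * T) n0) i}"
    using marker_dec_round_end round_outcome_agreement[OF _ n0] by (auto split: if_splits)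
  then show ?thesis
    using card_mono[of "{_}"] by fastforce
qed

lemma marker_liveness:
  assumes "i \<le> K" and M: "marked_proc N C dec_M i (hist_M start) = Some m" and "I i \<in> H"
  shows "dec_M (I i) (hist_M (i * T) (I i)) = Marked (Some m)"
proof -
  have m: "m = b" "b \<in> H"
    using M marked_is_broadcaster marked_proc_honest by blast+
  moreover have "start div T < K"
    using assms(1) T_pos round_pos by simp
  ultimately have "v_B = I i"
    using M T_pos round_pos by (simp add: v_B_def marker_input_def)
  then show ?thesis
    using round_outcome_validity[OF m(2) \<open>I i \<in> H\<close>] marker_dec_round_end[OF \<open>I i \<in> H\<close>] m by simp
qed

lemma marker_non_impersonation:
  assumes M: "marked_proc N C dec_M i (hist_M start) = None" and n: "n \<in> H"
    and marked: "dec_M n (hist_M (i * T) n) = Marked (Some k)"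
  shows "k \<notin> H"
proof
  assume "k \<in> H"
  moreover have "k = b" "round_outcome N T decB n (hist_M (i * T) n) i = n"
    using marked marker_dec_round_end[OF n] by (auto split: if_splits)
  moreover have "v_B = 0"
    using M round_pos by (simp add: v_B_def marker_input_def)
  ultimately have "n = 0"
    using round_outcome_validity[OF _ n] by simp
  then show False
    using n by (simp add: honest_def)
qed

lemma next_round_broadcaster:
  "\<exists>b'\<in>{1..N}. (\<forall>n\<in>H. broadcaster N T decB n (hist_M (i * T) n) (Suc i) = b') \<and>
    (\<forall>m. marked_proc N C dec_M (Suc i) (hist_M (i * T)) = Some m \<longrightarrow> m = b')"
proof (cases "H = {}")
  case True
  then show ?thesis
    using N_pos marked_proc_honest by fastforce
next
  case False
  then obtain n0 where n0: "n0 \<in> H"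
    by blast
  define b' where "b' = broadcaster N T decB n0 (hist_M (i * T) n0) (Suc i)"
  have i: "0 < i"
    using round_pos by simp
  have agreed: "\<forall>n\<in>H. broadcaster N T decB n (hist_M (i * T) n) (Suc i) = b'"
  proof
    fix n assume "n \<in> H"
    show "broadcaster N T decB n (hist_M (i * T) n) (Suc i) = b'"
      unfolding b'_def broadcaster_Suc[OF i] round_outcome_agreement[OF \<open>n \<in> H\<close> n0] ..
  qed
  have "m = b'" if "marked_proc N C dec_M (Suc i) (hist_M (i * T)) = Some m" for m
  proof -
    have "m \<in> H" "dec_M m (hist_M (i * T) m) \<noteq> Unmarked"
      using marked_proc_SomeD[OF that] i by auto
    then have "round_outcome N T decB m (hist_M (i * T) m) i = m" "m \<in> {1..N}"
      using marker_dec_round_end honest_in_range by (auto split: if_splits)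
    then show ?thesis
      using agreed \<open>m \<in> H\<close> broadcaster_Suc[OF i] by force
  qed
  then show ?thesis
    using agreed broadcaster_in_range[OF N_pos] b'_def by blast
qed

end

context marker_execution
begin

lemma broadcaster_invariant:
  "1 \<le> i \<Longrightarrow> \<exists>b\<in>{1..N}. (\<forall>n\<in>H. broadcaster N T decB n (hist_M ((i - 1) * T) n) i = b) \<and>
     (\<forall>m. marked_proc N C dec_M i (hist_M ((i - 1) * T)) = Some m \<longrightarrow> m = b)"
proof (induction i rule: nat_induct_at_least)
  case base
  show ?case
    using N_pos by (auto simp: marked_proc_def broadcaster.simps(2) split: if_splits)
next
  case (Suc i)
  then obtain b where "b \<in> {1..N}" "\<forall>n\<in>H. broadcaster N T decB n (hist_M ((i - 1) * T) n) i = b"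
    "\<forall>m. marked_proc N C dec_M i (hist_M ((i - 1) * T)) = Some m \<longrightarrow> m = b"
    by blast
  with Suc.hyps interpret marker_round N f T mc sc K V sendB decB I C adv i b
    by unfold_locales
  show ?case
    using next_round_broadcaster by simp
qed

lemma round_correct:
  assumes "i \<in> {1..K}"
  shows "(\<forall>n \<in> H. \<forall>k. dec_M n (hist_M (i * T) n) = Marked (Some k) \<longrightarrow> k \<in> {1..N}) \<and>
    card {n \<in> H. dec_M n (hist_M (i * T) n) \<noteq> Unmarked} \<le> 1 \<and>
    (\<forall>m. marked_proc N C dec_M i (hist_M ((i - 1) * T)) = Some m \<and> I i \<in> H \<longrightarrow>
       dec_M (I i) (hist_M (i * T) (I i)) = Marked (Some m)) \<and>
    (marked_proc N C dec_M i (hist_M ((i - 1) * T)) = None \<longrightarrow>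
       (\<forall>n \<in> H. \<forall>k. dec_M n (hist_M (i * T) n) = Marked (Some k) \<longrightarrow> k \<notin> H)) \<and>
    (\<Sum>s \<in> {(i - 1) * T..<i * T}. msgs_at N C send_M adv inp_M s) \<le> mc \<and>
    (\<Sum>s \<in> {(i - 1) * T..<i * T}. sigs_at N C send_M adv inp_M s) \<le> sc"
proof -
  from assms have "1 \<le> i"
    by simp
  then obtain b where "b \<in> {1..N}" "\<forall>n\<in>H. broadcaster N T decB n (hist_M ((i - 1) * T) n) i = b"
    "\<forall>m. marked_proc N C dec_M i (hist_M ((i - 1) * T)) = Some m \<longrightarrow> m = b"
    using broadcaster_invariant by blast
  with \<open>1 \<le> i\<close> interpret marker_round N f T mc sc K V sendB decB I C adv i b
    by unfold_locales
  show ?thesis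
    using marked_previous_in_range card_marked_le_1 marker_liveness marker_non_impersonation
      round_message_bound round_signature_bound assms by auto
qed

end

text \<open>With T = 0, P_1 decides on the empty history, so validity cannot hold for both inputs
  0 and 1.\<close>

lemma solves_BB_steps_pos:
  assumes BB: "solves_BB N f V T mc sc sendB decB" and "1 \<le> N" "{1..N} \<subseteq> V" "0 \<in> V"
  shows "0 < T"
proof (rule ccontr)
  assume "\<not> 0 < T"
  have decides: "decB 1 [] = v" if "v \<in> V" for v
  proof -
    have "f_adversary N f {} sendB (\<lambda>t c. []) (bb_input v)"
      by (simp add: f_adversary_def admissible_adv_def)
    moreover have "1 \<in> honest N {}" and "hists_at N {} sendB (\<lambda>t c. []) (bb_input v) T = (\<lambda>n. [])"
      using \<open>1 \<le> N\<close> \<open>\<not> 0 < T\<close> by (simp_all add: honest_def hists_at_def)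
    ultimately show ?thesis
      using BB that unfolding solves_BB_def Let_def by fastforce
  qed
  have "1 \<in> V"
    using assms by auto
  then show False
    using decides[OF \<open>0 \<in> V\<close>] decides[of 1] by simp
qed

lemma solves_marker_marker_protocol:
  assumes "solves_BB N f V T mc sc sendB decB" "0 < T" "1 \<le> N" "{1..N} \<subseteq> V" "0 \<in> V"
  shows "solves_marker N f K T mc sc (marker_send N T sendB decB) (marker_dec N T decB)"
proof -
  have "valid_send N (marker_send N T sendB decB)"
    using assms valid_send_marker_send by (simp add: solves_BB_def)
  moreover note marker_execution.round_correct[OF marker_execution.intro[OF assms]]
  ultimately show ?thesis
    unfolding solves_marker_def Let_def hists_at_def by blast
qed

lemma solves_marker_no_processes: "solves_marker 0 f K T mc sc (\<lambda>n h. []) (\<lambda>n h. Unmarked)"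
  by (auto simp: solves_marker_def valid_send_def honest_def Let_def)

theorem mainTheorem2:
  fixes N f T mc sc :: nat and V :: "nat set"
  assumes "finite V" and "0 \<in> V" and "{1..N} \<subseteq> V"
    and "\<exists>sendf dec. solves_BB N f V T mc sc sendf dec"
  shows "\<forall>K. \<exists>sendf dec. solves_marker N f K T mc sc sendf dec"
proof
  fix K
  obtain sendB decB where BB: "solves_BB N f V T mc sc sendB decB"
    using assms(4) by blast
  show "\<exists>sendf dec. solves_marker N f K T mc sc sendf dec"
  proof (cases "N = 0")
    case True
    then show ?thesis
      using solves_marker_no_processes by blast
  next
    case False
    then have "1 \<le> N"
      by simp
    with BB assms(2,3) have "0 < T"
      using solves_BB_steps_pos by blast
    with BB \<open>1 \<le> N\<close> assms(2,3) show ?thesis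
      using solves_marker_marker_protocol by blast
  qed
qed

end
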